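(* Let $m\ge 3$ and let $X$ be a finite connected $2$-connected graph such that the number $N_e$ of maximal spanning trees of $X$ not containing the edge $e$ equals a constant $N$ independent of $e$. Let $\widetilde{X}$ be its $\mathbb{Z}_m$-homology cover with graph metric $d$, and let $d_Q$ be as defined below. Then for all $x,y\in\widetilde{X}$, $$d_Q(x,y)<\mathrm{girth}(X)\iff d(x,y)<\mathrm{girth}(X),$$ and if these inequalities hold then $d_Q(x,y)=d(x,y)$.
   Context: A graph is $2$-connected if removing any single edge leaves it connected; girth is the length of a shortest cycle. $\mathbb{Z}_m$-homology cover: fix orientations of the edges of $X$; for a maximal spanning tree $T$ with complementary edges $e_1,\dots,e_r$ (a free basis of $\pi_1(X)$), let $\rho:\pi_1(X)\to K=\pi_1(X)/[\pi_1(X),\pi_1(X)]\pi_1(X)^m\cong\oplus^r\mathbb{Z}_m$; $\widetilde{X}$ has vertices $V(X)\times K$, edges $E(X)\times K$, where for $e$ from $v$ to $w$ the edge $(e,k)$ joins $(v,k)$ to $(w,k)$ if $e\in T$ and to $(w,\rho(e)k)$ if $e\notin T$ (independent of $T$ up to isomorphism over $X$); $\pi:\widetilde{X}\to X$ is the projection. For a maximal tree $T$, the clouds are the sets $V(X)\times\{k\}$, $k\in K$; $C^T_x$ denotes the cloud containing $x$, and clouds are identified with elements of $\oplus^r\mathbb{Z}_m$; $d_T$ is the word metric on $\oplus^r\mathbb{Z}_m$ with respect to the generators $\rho(e_1),\dots,\rho(e_r)$ (one generator per factor). The metric $d_Q$: for $x,y\in\widetilde{X}$ choose a $d$-geodesic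 $\gamma$ from $x$ to $y$, and for an edge $e$ of $X$ let $\phi(e,x,y)\in\{0,\dots,m-1\}$ be the residue mod $m$ of $\big||\pi^{-1}(e)\cap\gamma|-|\pi^{-1}(e^{-1})\cap\gamma|\big|$, where these count the traversals by $\gamma$ of lifts of $e$ in the positive, respectively negative, direction. Then $d_Q(x,y)=\sum_{e\in E(X)}\sum_{T:\,e\notin T}\frac{1}{N_e}\min\{\phi(e,x,y),m-\phi(e,x,y)\}$, the inner sum over maximal spanning trees not containing $e$. When $N_e=N$ for all $e$ one has $d_Q(x,y)=\frac1N\sum_T d_T(C^T_x,C^T_y)$, summing over all maximal spanning trees $T$. *)

theory Defs
  imports "HOL-Library.Extended_Real"
begin

text \<open>Finite (multi)graphs with oriented edges: a vertex set V, an edge set E and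
  maps src, tgt giving the initial and terminal vertex of each edge (loops and
  parallel edges allowed).  A dart is an edge together with a direction
  (True = traversed positively, from src e to tgt e).\<close>

definition dstart :: "('e \<Rightarrow> 'v) \<Rightarrow> ('e \<Rightarrow> 'v) \<Rightarrow> 'e \<times> bool \<Rightarrow> 'v" where
  "dstart src tgt d = (if snd d then src (fst d) else tgt (fst d))"

definition dend :: "('e \<Rightarrow> 'v) \<Rightarrow> ('e \<Rightarrow> 'v) \<Rightarrow> 'e \<times> bool \<Rightarrow> 'v" where
  "dend src tgt d = (if snd d then tgt (fst d) else src (fst d))"

fun is_walk :: "('e \<Rightarrow> 'v) \<Rightarrow> ('e \<Rightarrow> 'v) \<Rightarrow> 'e set \<Rightarrow> 'v \<Rightarrow> ('e \<times> bool) list \<Rightarrow> 'v \<Rightarrow> bool" where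
  "is_walk src tgt F u [] v = (u = v)"
| "is_walk src tgt F u (d # ds) v =
     (fst d \<in> F \<and> dstart src tgt d = u \<and> is_walk src tgt F (dend src tgt d) ds v)"

definition connected_on :: "('e \<Rightarrow> 'v) \<Rightarrow> ('e \<Rightarrow> 'v) \<Rightarrow> 'v set \<Rightarrow> 'e set \<Rightarrow> bool" where
  "connected_on src tgt V F = (V \<noteq> {} \<and> (\<forall>u\<in>V. \<forall>v\<in>V. \<exists>ds. is_walk src tgt F u ds v))"

definition is_cycle :: "('e \<Rightarrow> 'v) \<Rightarrow> ('e \<Rightarrow> 'v) \<Rightarrow> 'e set \<Rightarrow> ('e \<times> bool) list \<Rightarrow> bool" where
  "is_cycle src tgt F ds = (ds \<noteq> [] \<and>
     is_walk src tgt F (dstart src tgt (List.hd ds)) ds (dstart src tgt (List.hd ds)) \<and>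
     distinct (map fst ds) \<and> distinct (map (dstart src tgt) ds))"

text \<open>Girth (\<infinity> if there is no cycle).\<close>
definition girth :: "('e \<Rightarrow> 'v) \<Rightarrow> ('e \<Rightarrow> 'v) \<Rightarrow> 'e set \<Rightarrow> ereal" where
  "girth src tgt E = (INF c \<in> {c. is_cycle src tgt E c}. ereal (real (length c)))"

definition is_graph :: "'v set \<Rightarrow> 'e set \<Rightarrow> ('e \<Rightarrow> 'v) \<Rightarrow> ('e \<Rightarrow> 'v) \<Rightarrow> bool" where
  "is_graph V E src tgt = (finite V \<and> finite E \<and> (\<forall>e\<in>E. src e \<in> V \<and> tgt e \<in> V))"

text \<open>2-connected in the sense of the paper: removing any single edge leaves it connected.\<close>
definition two_connected :: "'v set \<Rightarrow> 'e set \<Rightarrow> ('e \<Rightarrow> 'v) \<Rightarrow> ('e \<Rightarrow> 'v) \<Rightarrow> bool" where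
  "two_connected V E src tgt = (\<forall>e\<in>E. connected_on src tgt V (E - {e}))"

definition spanning_tree :: "'v set \<Rightarrow> 'e set \<Rightarrow> ('e \<Rightarrow> 'v) \<Rightarrow> ('e \<Rightarrow> 'v) \<Rightarrow> 'e set \<Rightarrow> bool" where
  "spanning_tree V E src tgt T = (T \<subseteq> E \<and> connected_on src tgt V T \<and> (\<nexists>c. is_cycle src tgt T c))"

definition N_edge :: "'v set \<Rightarrow> 'e set \<Rightarrow> ('e \<Rightarrow> 'v) \<Rightarrow> ('e \<Rightarrow> 'v) \<Rightarrow> 'e \<Rightarrow> nat" where
  "N_edge V E src tgt e = card {T. spanning_tree V E src tgt T \<and> e \<notin> T}"

text \<open>Z_m-homology cover built from a maximal spanning tree T0.
  The group K = (Z_m)^r, r = |E - T0|, is represented as the functions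
  E - T0 \<rightarrow> {0..<m}, extended by 0; rho e is the generator attached to e
  if e \<notin> T0 and 0 if e \<in> T0.\<close>
definition cloud_group :: "'e set \<Rightarrow> 'e set \<Rightarrow> nat \<Rightarrow> ('e \<Rightarrow> int) set" where
  "cloud_group E T0 m = {k. \<forall>e. (e \<in> E - T0 \<longrightarrow> 0 \<le> k e \<and> k e < int m) \<and> (e \<notin> E - T0 \<longrightarrow> k e = 0)}"

definition rho_act :: "'e set \<Rightarrow> nat \<Rightarrow> 'e \<Rightarrow> ('e \<Rightarrow> int) \<Rightarrow> ('e \<Rightarrow> int)" where
  "rho_act T0 m e k = (\<lambda>e'. (k e' + (if e' = e \<and> e \<notin> T0 then 1 else 0)) mod int m)"

definition cov_V :: "'v set \<Rightarrow> 'e set \<Rightarrow> 'e set \<Rightarrow> nat \<Rightarrow> ('v \<times> ('e \<Rightarrow> int)) set" where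
  "cov_V V E T0 m = V \<times> cloud_group E T0 m"

definition cov_E :: "'e set \<Rightarrow> 'e set \<Rightarrow> nat \<Rightarrow> ('e \<times> ('e \<Rightarrow> int)) set" where
  "cov_E E T0 m = E \<times> cloud_group E T0 m"

definition cov_src :: "('e \<Rightarrow> 'v) \<Rightarrow> 'e \<times> ('e \<Rightarrow> int) \<Rightarrow> 'v \<times> ('e \<Rightarrow> int)" where
  "cov_src src ek = (src (fst ek), snd ek)"

definition cov_tgt :: "('e \<Rightarrow> 'v) \<Rightarrow> 'e set \<Rightarrow> nat \<Rightarrow> 'e \<times> ('e \<Rightarrow> int) \<Rightarrow> 'v \<times> ('e \<Rightarrow> int)" where
  "cov_tgt tgt T0 m ek = (tgt (fst ek), rho_act T0 m (fst ek) (snd ek))"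

definition graph_dist :: "('e \<Rightarrow> 'v) \<Rightarrow> ('e \<Rightarrow> 'v) \<Rightarrow> 'e set \<Rightarrow> 'v \<Rightarrow> 'v \<Rightarrow> nat" where
  "graph_dist src tgt F u v = (LEAST n. \<exists>ds. is_walk src tgt F u ds v \<and> length ds = n)"

definition cov_dist :: "'e set \<Rightarrow> ('e \<Rightarrow> 'v) \<Rightarrow> ('e \<Rightarrow> 'v) \<Rightarrow> 'e set \<Rightarrow> nat
    \<Rightarrow> 'v \<times> ('e \<Rightarrow> int) \<Rightarrow> 'v \<times> ('e \<Rightarrow> int) \<Rightarrow> nat" where
  "cov_dist E src tgt T0 m x y = graph_dist (cov_src src) (cov_tgt tgt T0 m) (cov_E E T0 m) x y"

definition geodesic :: "'e set \<Rightarrow> ('e \<Rightarrow> 'v) \<Rightarrow> ('e \<Rightarrow> 'v) \<Rightarrow> 'e set \<Rightarrow> nat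
    \<Rightarrow> 'v \<times> ('e \<Rightarrow> int) \<Rightarrow> 'v \<times> ('e \<Rightarrow> int) \<Rightarrow> (('e \<times> ('e \<Rightarrow> int)) \<times> bool) list" where
  "geodesic E src tgt T0 m x y = (SOME ds.
      is_walk (cov_src src) (cov_tgt tgt T0 m) (cov_E E T0 m) x ds y \<and>
      length ds = cov_dist E src tgt T0 m x y)"

definition phi :: "'e set \<Rightarrow> ('e \<Rightarrow> 'v) \<Rightarrow> ('e \<Rightarrow> 'v) \<Rightarrow> 'e set \<Rightarrow> nat
    \<Rightarrow> 'e \<Rightarrow> 'v \<times> ('e \<Rightarrow> int) \<Rightarrow> 'v \<times> ('e \<Rightarrow> int) \<Rightarrow> nat" where
  "phi E src tgt T0 m e x y =
    (let \<gamma> = geodesic E src tgt T0 m x y;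
         pos = length (filter (\<lambda>d. fst (fst d) = e \<and> snd d) \<gamma>);
         neg = length (filter (\<lambda>d. fst (fst d) = e \<and> \<not> snd d) \<gamma>)
     in nat \<bar>int pos - int neg\<bar> mod m)"

definition dQ :: "'v set \<Rightarrow> 'e set \<Rightarrow> ('e \<Rightarrow> 'v) \<Rightarrow> ('e \<Rightarrow> 'v) \<Rightarrow> 'e set \<Rightarrow> nat
    \<Rightarrow> 'v \<times> ('e \<Rightarrow> int) \<Rightarrow> 'v \<times> ('e \<Rightarrow> int) \<Rightarrow> real" where
  "dQ V E src tgt T0 m x y =
     (\<Sum>e\<in>E. \<Sum>T\<in>{T. spanning_tree V E src tgt T \<and> e \<notin> T}.
        (1 / real (N_edge V E src tgt e)) *
        real (min (phi E src tgt T0 m e x y) (m - phi E src tgt T0 m e x y)))"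

end

theory Submission
  imports Defs
begin

text \<open>Project a geodesic \<open>\<gamma>\<close> from \<open>x = (a, k\<^sub>x)\<close> to \<open>y = (b, k\<^sub>y)\<close> to a walk \<open>p\<close> of the same
  length in \<open>X\<close>; the cloud of \<open>y\<close> is \<open>k\<^sub>x\<close> shifted by the integral 1-chain of \<open>p\<close> reduced mod
  \<open>m\<close>, and \<open>\<phi>(e,x,y)\<close> is the absolute value of that chain at \<open>e\<close> mod \<open>m\<close>.  Since \<open>N\<^sub>e = N\<close> is
  nonzero, \<open>d\<^sub>Q(x,y)\<close> is just the sum over \<open>e\<close> of the cyclic norms of these residues, which is
  at most \<open>|p| = d(x,y)\<close>.  Conversely, the support \<open>S\<close> of the chain mod \<open>m\<close> has at most
  \<open>d\<^sub>Q(x,y)\<close> edges; if this is below the girth, \<open>S\<close> is a forest.  On a forest a chain mod \<open>m\<close>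
  with boundary \<open>a - b\<close> is carried by a path from \<open>a\<close> to \<open>b\<close> inside \<open>S\<close> (peel off leaves),
  and that path lifts to a walk from \<open>x\<close> to \<open>y\<close> of length at most \<open>|S| \<le> d\<^sub>Q(x,y)\<close>.\<close>

section \<open>Walks, paths and cycles\<close>

lemma walk_append:
  "is_walk src tgt F a (xs @ ys) b \<longleftrightarrow> (\<exists>c. is_walk src tgt F a xs c \<and> is_walk src tgt F c ys b)"
  by (induction xs arbitrary: a) auto

lemma walk_mono: "is_walk src tgt F a xs b \<Longrightarrow> F \<subseteq> G \<Longrightarrow> is_walk src tgt G a xs b"
  by (induction xs arbitrary: a) auto

lemma walk_edges: "is_walk src tgt F a xs b \<Longrightarrow> fst ` set xs \<subseteq> F"
  by (induction xs arbitrary: a) auto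

lemma walk_end_unique: "is_walk src tgt F a w b \<Longrightarrow> is_walk src tgt F a w b' \<Longrightarrow> b = b'"
  by (induction w arbitrary: a) auto

lemma walk_last: "is_walk src tgt F a P w \<Longrightarrow> P \<noteq> [] \<Longrightarrow> dend src tgt (last P) = w"
  by (induction P arbitrary: a) auto

lemma dart_ends: "{dstart src tgt d, dend src tgt d} = {src (fst d), tgt (fst d)}"
  by (auto simp: dstart_def dend_def)

lemma walk_start_in: "is_walk src tgt F c xs b \<Longrightarrow> c \<in> set (map (dstart src tgt) xs) \<union> {b}"
  by (cases xs) auto

lemma walk_dend_in:
  "is_walk src tgt F a xs b \<Longrightarrow> d \<in> set xs \<Longrightarrow> dend src tgt d \<in> set (map (dstart src tgt) xs) \<union> {b}"
proof (induction xs arbitrary: a)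
  case (Cons d' xs)
  then show ?case using walk_start_in[of src tgt F "dend src tgt d'" xs b] by auto
qed simp

lemma walk_vertices_in:
  "is_walk src tgt F a P w \<Longrightarrow> \<forall>e\<in>F. src e \<in> V \<and> tgt e \<in> V \<Longrightarrow> a \<in> V
    \<Longrightarrow> set (map (dstart src tgt) P @ [w]) \<subseteq> V"
proof (induction P arbitrary: a)
  case (Cons d P)
  then have "dend src tgt d \<in> V" by (auto simp: dend_def)
  then show ?case using Cons by auto
qed simp

text \<open>A path is a walk whose vertex sequence, including the final vertex, is repetition free.\<close>

lemma walk_to_path:
  "is_walk src tgt F a w b \<Longrightarrow>
    \<exists>w'. is_walk src tgt F a w' b \<and> distinct (map (dstart src tgt) w' @ [b]) \<and> length w' \<le> length w"
proof (induction w arbitrary: a)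
  case Nil then show ?case by auto
next
  case (Cons d w)
  then have d: "fst d \<in> F" "dstart src tgt d = a" and w: "is_walk src tgt F (dend src tgt d) w b" by auto
  from Cons.IH[OF w] obtain w'' where w'': "is_walk src tgt F (dend src tgt d) w'' b"
    "distinct (map (dstart src tgt) w'' @ [b])" "length w'' \<le> length w" by blast
  show ?case
  proof (cases "a \<in> set (map (dstart src tgt) w'' @ [b])")
    case False
    then show ?thesis using w'' d by (intro exI[of _ "d # w''"]) auto
  next
    case True
    show ?thesis
    proof (cases "a = b")
      case True then show ?thesis by (intro exI[of _ "[]"]) auto
    next
      case False
      with True obtain d' where d': "d' \<in> set w''" "dstart src tgt d' = a" by auto
      then obtain u1 u2 where sp: "w'' = u1 @ d' # u2" by (meson split_list)
      with w''(1) obtain c where "is_walk src tgt F c (d' # u2) b" by (auto simp: walk_append)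
      then have "is_walk src tgt F a (d' # u2) b" using d' by auto
      moreover have "distinct (map (dstart src tgt) (d' # u2) @ [b])" using w''(2) sp by auto
      moreover have "length (d' # u2) \<le> length (d # w)" using sp w''(3) by auto
      ultimately show ?thesis by blast
    qed
  qed
qed

lemma path_distinct_edges:
  "is_walk src tgt F a w b \<Longrightarrow> distinct (map (dstart src tgt) w @ [b]) \<Longrightarrow> distinct (map fst w)"
proof (induction w arbitrary: a)
  case (Cons d w)
  then have d: "dstart src tgt d = a" and w: "is_walk src tgt F (dend src tgt d) w b" by auto
  have dist: "distinct (map (dstart src tgt) w @ [b])" "a \<notin> set (map (dstart src tgt) w @ [b])"
    using Cons.prems(2) d by auto
  have "fst d \<notin> fst ` set w"
  proof
    assume "fst d \<in> fst ` set w"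
    then obtain d' where d': "d' \<in> set w" "fst d' = fst d" by auto
    have e: "{dstart src tgt d', dend src tgt d'} = {a, dend src tgt d}"
      using dart_ends[of src tgt d'] dart_ends[of src tgt d] d d'(2) by metis
    have "dstart src tgt d' \<noteq> a" using dist(2) d'(1) by auto
    then have "dend src tgt d' = a" using e by (metis doubleton_eq_iff)
    then show False using walk_dend_in[OF w d'(1)] dist(2) by auto
  qed
  then show ?case using Cons.IH[OF w dist(1)] by simp
qed simp

lemma path_dend_eq_end_imp_last:
  "is_walk src tgt F a P w \<Longrightarrow> distinct (map (dstart src tgt) P @ [w]) \<Longrightarrow> d \<in> set P
    \<Longrightarrow> dend src tgt d = w \<Longrightarrow> d = last P"
proof (induction P arbitrary: a)
  case (Cons d0 P)
  then have w: "is_walk src tgt F (dend src tgt d0) P w"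
    and dP: "distinct (map (dstart src tgt) P @ [w])" by auto
  show ?case
  proof (cases "P = []")
    case True then show ?thesis using Cons.prems by auto
  next
    case False
    have "dend src tgt d0 \<in> set (map (dstart src tgt) P)"
      using False w by (cases P) auto
    then have "d \<noteq> d0" using Cons.prems(4) dP by auto
    then show ?thesis using Cons.IH[OF w dP] Cons.prems False by simp
  qed
qed simp

lemma cycle_mono: "is_cycle src tgt S c \<Longrightarrow> S \<subseteq> E \<Longrightarrow> is_cycle src tgt E c"
  unfolding is_cycle_def using walk_mono by metis

lemma acyclic_no_loop: "\<nexists>c. is_cycle src tgt S c \<Longrightarrow> e \<in> S \<Longrightarrow> src e \<noteq> tgt e"
  by (auto simp: is_cycle_def dstart_def dend_def dest: spec[of _ "[(e, True)]"])

lemma girth_le: "is_cycle src tgt E c \<Longrightarrow> girth src tgt E \<le> ereal (real (length c))"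
  unfolding girth_def by (rule INF_lower) simp

lemma two_connected_edge_on_cycle:
  assumes "two_connected V E src tgt" "\<forall>e\<in>E. src e \<in> V \<and> tgt e \<in> V" "e \<in> E"
  shows "\<exists>c. is_cycle src tgt E c \<and> e \<in> fst ` set c"
proof -
  have "connected_on src tgt V (E - {e})" using assms(1,3) unfolding two_connected_def by blast
  then obtain w where "is_walk src tgt (E - {e}) (tgt e) w (src e)"
    using assms(2,3) unfolding connected_on_def by blast
  from walk_to_path[OF this] obtain P where P: "is_walk src tgt (E - {e}) (tgt e) P (src e)"
    "distinct (map (dstart src tgt) P @ [src e])" by blast
  have "is_cycle src tgt E ((e, True) # P)"
    unfolding is_cycle_def
  proof (intro conjI)
    show "is_walk src tgt E (dstart src tgt (hd ((e, True) # P))) ((e, True) # P)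
        (dstart src tgt (hd ((e, True) # P)))"
      using walk_mono[OF P(1), of E] assms(3) by (auto simp: dstart_def dend_def)
    show "distinct (map fst ((e, True) # P))"
      using path_distinct_edges[OF P] walk_edges[OF P(1)] by auto
    show "distinct (map (dstart src tgt) ((e, True) # P))" using P(2) by (auto simp: dstart_def)
  qed simp
  then show ?thesis by force
qed


section \<open>The integral 1-chain of a walk and its boundary\<close>

fun walk_chain :: "('e \<times> bool) list \<Rightarrow> 'e \<Rightarrow> int" where
  "walk_chain [] e = 0"
| "walk_chain (d # ds) e = (if fst d = e then (if snd d then 1 else -1) else 0) + walk_chain ds e"

definition boundary :: "'e set \<Rightarrow> ('e \<Rightarrow> 'v) \<Rightarrow> ('e \<Rightarrow> 'v) \<Rightarrow> ('e \<Rightarrow> int) \<Rightarrow> 'v \<Rightarrow> int" where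
  "boundary E src tgt f v = (\<Sum>e\<in>E. (if src e = v then f e else 0) - (if tgt e = v then f e else 0))"

lemma walk_chain_append: "walk_chain (xs @ ys) e = walk_chain xs e + walk_chain ys e"
  by (induction xs) auto

lemma walk_chain_outside: "is_walk src tgt F a q b \<Longrightarrow> e \<notin> F \<Longrightarrow> walk_chain q e = 0"
  by (induction q arbitrary: a) auto

lemma walk_chain_replicate: "walk_chain (concat (replicate n c)) e = int n * walk_chain c e"
  by (induction n) (auto simp: walk_chain_append algebra_simps)

lemma walk_replicate: "is_walk src tgt F a c a \<Longrightarrow> is_walk src tgt F a (concat (replicate n c)) a"
  by (induction n) (auto simp: walk_append)

lemma boundary_add: "boundary E src tgt (\<lambda>e. f e + g e) v = boundary E src tgt f v + boundary E src tgt g v"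
  unfolding boundary_def by (simp add: sum.distrib[symmetric]) (rule sum.cong, auto)

lemma boundary_diff: "boundary E src tgt (\<lambda>e. f e - g e) v = boundary E src tgt f v - boundary E src tgt g v"
  unfolding boundary_def by (simp add: sum_subtractf[symmetric]) (rule sum.cong, auto)

lemma boundary_dart:
  assumes "finite E" "fst d \<in> E"
  shows "boundary E src tgt (\<lambda>e. if fst d = e then (if snd d then 1 else -1) else 0) v
     = (if dstart src tgt d = v then 1 else 0) - (if dend src tgt d = v then 1 else 0)"
proof -
  let ?s = "\<lambda>e. if snd d then 1 else -1 :: int"
  have "boundary E src tgt (\<lambda>e. if fst d = e then ?s e else 0) v =
     (\<Sum>e\<in>E. if e = fst d then (if src e = v then ?s e else 0) - (if tgt e = v then ?s e else 0) else 0)"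
    unfolding boundary_def by (rule sum.cong) auto
  also have "\<dots> = (if src (fst d) = v then ?s d else 0) - (if tgt (fst d) = v then ?s d else 0)"
    using assms by (simp add: sum.delta)
  finally show ?thesis by (auto simp: dstart_def dend_def)
qed

lemma boundary_walk_chain:
  assumes "finite E" "F \<subseteq> E"
  shows "is_walk src tgt F a q b \<Longrightarrow>
    boundary E src tgt (walk_chain q) v = (if v = a then 1 else 0) - (if v = b then 1 else 0)"
proof (induction q arbitrary: a)
  case Nil then show ?case by (simp add: boundary_def)
next
  case (Cons d q)
  then have d: "fst d \<in> E" "dstart src tgt d = a" and w: "is_walk src tgt F (dend src tgt d) q b"
    using assms by auto
  have "walk_chain (d # q) = (\<lambda>e. (if fst d = e then (if snd d then 1 else -1) else 0) + walk_chain q e)"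
    by auto
  then have "boundary E src tgt (walk_chain (d # q)) v
      = boundary E src tgt (\<lambda>e. if fst d = e then (if snd d then 1 else -1) else 0) v
        + boundary E src tgt (walk_chain q) v"
    by (simp add: boundary_add)
  also have "\<dots> = ((if dstart src tgt d = v then 1 else 0) - (if dend src tgt d = v then 1 else 0))
      + ((if v = dend src tgt d then 1 else 0) - (if v = b then 1 else 0))"
    by (simp only: boundary_dart[OF assms(1) d(1)] Cons.IH[OF w])
  also have "\<dots> = (if v = a then 1 else 0) - (if v = b then 1 else 0)"
    using d(2) by auto
  finally show ?case .
qed

lemma sum_abs_walk_chain_le_length:
  assumes "finite E" "F \<subseteq> E"
  shows "is_walk src tgt F a q b \<Longrightarrow> (\<Sum>e\<in>E. \<bar>walk_chain q e\<bar>) \<le> int (length q)"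
proof (induction q arbitrary: a)
  case (Cons d q)
  then have d: "fst d \<in> E" and w: "is_walk src tgt F (dend src tgt d) q b"
    using assms by auto
  have "(\<Sum>e\<in>E. \<bar>walk_chain (d # q) e\<bar>) \<le> (\<Sum>e\<in>E. (if e = fst d then 1 else 0) + \<bar>walk_chain q e\<bar>)"
    by (rule sum_mono) auto
  also have "\<dots> = 1 + (\<Sum>e\<in>E. \<bar>walk_chain q e\<bar>)"
    using d assms(1) by (simp add: sum.distrib sum.delta)
  also have "\<dots> \<le> int (length (d # q))" using Cons.IH[OF w] by simp
  finally show ?case .
qed simp

lemma boundary_not_dvd_imp_incident:
  assumes "\<not> int m dvd boundary E src tgt g v"
  shows "\<exists>e\<in>E. (src e = v \<or> tgt e = v) \<and> \<not> int m dvd g e"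
proof (rule ccontr)
  assume "\<not> ?thesis"
  then have "int m dvd boundary E src tgt g v"
    unfolding boundary_def by (intro dvd_sum) auto
  with assms show False by blast
qed

lemma boundary_at_leaf_not_dvd:
  assumes "finite E" "el \<in> E" "src el \<noteq> tgt el" "src el = w \<or> tgt el = w" "\<not> int m dvd g el"
    and "\<forall>e\<in>E-{el}. (src e = w \<or> tgt e = w) \<longrightarrow> int m dvd g e"
  shows "\<not> int m dvd boundary E src tgt g w"
proof -
  let ?t = "\<lambda>e. (if src e = w then g e else 0) - (if tgt e = w then g e else 0)"
  have "boundary E src tgt g w = ?t el + (\<Sum>e\<in>E-{el}. ?t e)"
    unfolding boundary_def using assms(1,2) by (simp add: sum.remove)
  moreover have "int m dvd (\<Sum>e\<in>E-{el}. ?t e)"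
    by (rule dvd_sum) (use assms(6) in auto)
  moreover have "\<not> int m dvd ?t el" using assms(3-5) by auto
  ultimately show ?thesis by (simp add: dvd_add_left_iff)
qed


section \<open>Chains mod \<open>m\<close> supported on a forest\<close>

lemma acyclic_path_extension:
  assumes acyc: "\<nexists>c. is_cycle src tgt S c"
    and P: "is_walk src tgt S a P w" "P \<noteq> []" "distinct (map (dstart src tgt) P @ [w])"
    and \<delta>: "fst \<delta> \<in> S" "dstart src tgt \<delta> = w" "fst \<delta> \<noteq> fst (last P)"
  shows "dend src tgt \<delta> \<notin> set (map (dstart src tgt) P @ [w])"
proof
  define u where "u = dend src tgt \<delta>"
  assume "u \<in> set (map (dstart src tgt) P @ [w])"
  have w\<delta>: "is_walk src tgt S w [\<delta>] u" using \<delta> by (simp add: u_def)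
  show False
  proof (cases "u = w")
    case True
    then have "is_cycle src tgt S [\<delta>]" unfolding is_cycle_def using w\<delta> \<delta>(2) by simp
    then show False using acyc by blast
  next
    case False
    with \<open>u \<in> _\<close> obtain d' where d': "d' \<in> set P" "dstart src tgt d' = u" by auto
    then obtain P1 P2' where sp: "P = P1 @ d' # P2'" by (meson split_list)
    define P2 where "P2 = d' # P2'"
    from P(1) sp obtain c where "is_walk src tgt S c P2 w" by (auto simp: walk_append P2_def)
    then have wP2: "is_walk src tgt S u P2 w" using d' by (auto simp: P2_def)
    have dP2: "distinct (map (dstart src tgt) P2 @ [w])" using P(3) sp by (auto simp: P2_def)
    have lastP2: "last P2 = last P" using sp by (simp add: P2_def)
    have \<delta>P2: "fst \<delta> \<notin> fst ` set P2"
    proof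
      assume "fst \<delta> \<in> fst ` set P2"
      then obtain d'' where d'': "d'' \<in> set P2" "fst d'' = fst \<delta>" by auto
      have "w \<in> {dstart src tgt d'', dend src tgt d''}"
        using dart_ends[of src tgt d''] dart_ends[of src tgt \<delta>] d''(2) \<delta>(2) by auto
      moreover have "dstart src tgt d'' \<noteq> w" using dP2 d''(1) by auto
      ultimately have "d'' = last P2"
        using path_dend_eq_end_imp_last[OF wP2 dP2 d''(1)] by simp
      then show False using \<delta>(3) d''(2) lastP2 by simp
    qed
    have "is_cycle src tgt S (P2 @ [\<delta>])"
      unfolding is_cycle_def
    proof (intro conjI)
      have h: "hd (P2 @ [\<delta>]) = d'" by (simp add: P2_def)
      show "is_walk src tgt S (dstart src tgt (hd (P2 @ [\<delta>]))) (P2 @ [\<delta>]) (dstart src tgt (hd (P2 @ [\<delta>])))"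
        unfolding h d'(2) using wP2 w\<delta> by (auto simp: walk_append)
      show "distinct (map fst (P2 @ [\<delta>]))"
        using path_distinct_edges[OF wP2 dP2] \<delta>P2 by auto
      show "distinct (map (dstart src tgt) (P2 @ [\<delta>]))" using dP2 \<delta>(2) by simp
    qed simp
    then show False using acyc by blast
  qed
qed

text \<open>A longest path starting with a given edge of a forest ends in a leaf.\<close>

lemma forest_path_to_leaf:
  assumes fin: "finite V" and ends: "\<forall>e\<in>S. src e \<in> V \<and> tgt e \<in> V"
    and acyc: "\<nexists>c. is_cycle src tgt S c" and e: "e \<in> S" "a \<in> {src e, tgt e}"
  shows "\<exists>P w. is_walk src tgt S a P w \<and> P \<noteq> [] \<and> distinct (map (dstart src tgt) P @ [w]) \<and>
     (\<forall>e\<in>S. (src e = w \<or> tgt e = w) \<longrightarrow> e = fst (last P))"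
proof -
  define L where "L = {n. \<exists>P w. is_walk src tgt S a P w \<and> P \<noteq> [] \<and>
    distinct (map (dstart src tgt) P @ [w]) \<and> length P = n}"
  have aV: "a \<in> V" using ends e by auto
  have "n \<le> card V" if "n \<in> L" for n
  proof -
    from that obtain P w where P: "is_walk src tgt S a P w" "distinct (map (dstart src tgt) P @ [w])"
      "length P = n" unfolding L_def by blast
    have "length (map (dstart src tgt) P @ [w]) = card (set (map (dstart src tgt) P @ [w]))"
      using P(2) by (simp only: distinct_card)
    also have "\<dots> \<le> card V" using walk_vertices_in[OF P(1) ends aV] fin by (intro card_mono)
    finally show ?thesis using P(3) by simp
  qed
  then have finL: "finite L" by (meson finite_nat_set_iff_bounded_le)
  define \<delta> where "\<delta> = (if src e = a then (e, True) else (e, False))"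
  have "dstart src tgt \<delta> = a" "dend src tgt \<delta> \<noteq> a"
    using e acyclic_no_loop[OF acyc e(1)] by (auto simp: \<delta>_def dstart_def dend_def)
  then have "1 \<in> L" unfolding L_def using e(1)
    by (intro CollectI exI[of _ "[\<delta>]"] exI[of _ "dend src tgt \<delta>"]) (simp add: \<delta>_def)
  then have "Max L \<in> L" using finL by (metis Max_in empty_iff)
  then obtain P w where P: "is_walk src tgt S a P w" "P \<noteq> []" "distinct (map (dstart src tgt) P @ [w])"
      "length P = Max L" unfolding L_def by blast
  have "e' = fst (last P)" if e': "e' \<in> S" "src e' = w \<or> tgt e' = w" for e'
  proof (rule ccontr)
    assume ne: "e' \<noteq> fst (last P)"
    define \<delta>' where "\<delta>' = (if src e' = w then (e', True) else (e', False))"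
    have \<delta>': "fst \<delta>' \<in> S" "dstart src tgt \<delta>' = w" "fst \<delta>' \<noteq> fst (last P)"
      using e' ne by (auto simp: \<delta>'_def dstart_def)
    have "is_walk src tgt S a (P @ [\<delta>']) (dend src tgt \<delta>')" using P(1) \<delta>' by (auto simp: walk_append)
    moreover have "distinct (map (dstart src tgt) (P @ [\<delta>']) @ [dend src tgt \<delta>'])"
      using P(3) acyclic_path_extension[OF acyc P(1-3) \<delta>'] \<delta>'(2) by auto
    ultimately have "length (P @ [\<delta>']) \<in> L" unfolding L_def by blast
    then show False using Max_ge[OF finL] P(4) by fastforce
  qed
  then show ?thesis using P by blast
qed

lemma forest_support_leaf:
  assumes finV: "finite V" and finE: "finite E" and ends: "\<forall>e\<in>E. src e \<in> V \<and> tgt e \<in> V"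
    and S: "S = {e\<in>E. \<not> int m dvd g e}" and acyc: "\<nexists>c. is_cycle src tgt S c"
    and e: "e \<in> S" "a \<in> {src e, tgt e}"
  shows "\<exists>P w. is_walk src tgt S a P w \<and> distinct (map (dstart src tgt) P @ [w]) \<and> w \<noteq> a \<and>
    \<not> int m dvd boundary E src tgt g w"
proof -
  obtain P w where P: "is_walk src tgt S a P w" "P \<noteq> []" "distinct (map (dstart src tgt) P @ [w])"
    and leaf: "\<forall>e\<in>S. (src e = w \<or> tgt e = w) \<longrightarrow> e = fst (last P)"
    using forest_path_to_leaf[OF finV _ acyc e] ends S by auto
  define el where "el = fst (last P)"
  have elS: "el \<in> S" using walk_edges[OF P(1)] P(2) by (auto simp: el_def)
  have "src el = w \<or> tgt el = w"
    using dart_ends[of src tgt "last P"] walk_last[OF P(1,2)] unfolding el_def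
    by (metis insertCI insert_iff singletonD)
  moreover have "el \<in> E" "\<not> int m dvd g el" using elS S by auto
  moreover have "\<forall>e\<in>E-{el}. (src e = w \<or> tgt e = w) \<longrightarrow> int m dvd g e"
    using leaf S by (auto simp: el_def)
  ultimately have "\<not> int m dvd boundary E src tgt g w"
    using boundary_at_leaf_not_dvd[of E el src tgt w m g] finE acyclic_no_loop[OF acyc elS] by blast
  moreover have "w \<noteq> a" using P(1-3) by (cases P) auto
  ultimately show ?thesis using P by blast
qed

lemma dvd_if_acyclic_support_and_boundary_dvd:
  assumes "finite V" "finite E" "\<forall>e\<in>E. src e \<in> V \<and> tgt e \<in> V"
    and "\<nexists>c. is_cycle src tgt {e\<in>E. \<not> int m dvd g e} c"
    and "\<forall>v. int m dvd boundary E src tgt g v"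
  shows "\<forall>e\<in>E. int m dvd g e"
proof (rule ccontr)
  assume "\<not> (\<forall>e\<in>E. int m dvd g e)"
  then obtain e where "e \<in> {e\<in>E. \<not> int m dvd g e}" by blast
  from forest_support_leaf[OF assms(1-3) refl assms(4) this, of "src e"] assms(5)
  show False by auto
qed

lemma acyclic_support_chain_path:
  assumes finV: "finite V" and finE: "finite E" and ends: "\<forall>e\<in>E. src e \<in> V \<and> tgt e \<in> V"
    and m2: "m \<ge> 2" and S: "S = {e\<in>E. \<not> int m dvd f e}" and acyc: "\<nexists>c. is_cycle src tgt S c"
    and bd: "\<forall>v. boundary E src tgt f v = (if v = a then 1 else 0) - (if v = b then 1 else 0)"
  shows "\<exists>q. is_walk src tgt S a q b \<and> distinct (map fst q) \<and>
    (\<forall>e\<in>E. int m dvd (walk_chain q e - f e))"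
proof (cases "a = b")
  case True
  have "\<forall>e\<in>E. int m dvd f e"
    using dvd_if_acyclic_support_and_boundary_dvd[OF finV finE ends, of m f] acyc bd True
    unfolding S by simp
  then show ?thesis using True by (intro exI[of _ "[]"]) auto
next
  case False
  have "boundary E src tgt f a = 1" using bd False by simp
  then have a: "\<not> int m dvd boundary E src tgt f a" using m2 by simp
  obtain e where "e \<in> E" "src e = a \<or> tgt e = a" "\<not> int m dvd f e"
    using boundary_not_dvd_imp_incident[OF a] by blast
  then have e: "e \<in> S" "a \<in> {src e, tgt e}" using S by auto
  obtain P w where P: "is_walk src tgt S a P w" "distinct (map (dstart src tgt) P @ [w])" "w \<noteq> a"
    and w: "\<not> int m dvd boundary E src tgt f w"
    using forest_support_leaf[OF finV finE ends S acyc e] by blast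
  have "w = b"
  proof (rule ccontr)
    assume "w \<noteq> b"
    then have "boundary E src tgt f w = 0" using bd P(3) by simp
    then show False using w by simp
  qed
  with P have Pb: "is_walk src tgt S a P b" "distinct (map (dstart src tgt) P @ [b])" by simp_all
  have SE: "S \<subseteq> E" using S by auto
  have supp: "{e\<in>E. \<not> int m dvd f e - walk_chain P e} \<subseteq> S"
    using walk_chain_outside[OF Pb(1)] S by auto
  then have "\<nexists>c. is_cycle src tgt {e\<in>E. \<not> int m dvd f e - walk_chain P e} c"
    using acyc cycle_mono[OF _ supp] by blast
  moreover have "\<forall>v. int m dvd boundary E src tgt (\<lambda>e. f e - walk_chain P e) v"
    using boundary_diff[of E src tgt f "walk_chain P"] bd boundary_walk_chain[OF finE SE Pb(1)] by simp
  ultimately have "\<forall>e\<in>E. int m dvd f e - walk_chain P e"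
    by (rule dvd_if_acyclic_support_and_boundary_dvd[OF finV finE ends])
  then have "\<forall>e\<in>E. int m dvd walk_chain P e - f e" by (metis dvd_minus_iff minus_diff_eq)
  then show ?thesis using Pb path_distinct_edges[OF Pb] by blast
qed

lemma short_walk_with_same_residues:
  assumes finV: "finite V" and finE: "finite E" and ends: "\<forall>e\<in>E. src e \<in> V \<and> tgt e \<in> V"
    and m2: "m \<ge> 2" and p: "is_walk src tgt E a p b"
    and small: "ereal (real (card {e\<in>E. \<not> int m dvd walk_chain p e})) < girth src tgt E"
  shows "\<exists>q. is_walk src tgt E a q b \<and> (\<forall>e\<in>E. int m dvd (walk_chain q e - walk_chain p e)) \<and>
    length q \<le> card {e\<in>E. \<not> int m dvd walk_chain p e}"
proof -
  define S where "S = {e\<in>E. \<not> int m dvd walk_chain p e}"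
  have SE: "S \<subseteq> E" and finS: "finite S" using finE by (auto simp: S_def)
  have lenS: "length c \<le> card S" if "is_walk src tgt S u c w" "distinct (map fst c)" for c u w
  proof -
    have "length c = card (set (map fst c))" using that(2) by (metis distinct_card length_map)
    also have "\<dots> \<le> card S" using walk_edges[OF that(1)] finS by (intro card_mono) auto
    finally show ?thesis .
  qed
  have acyc: "\<nexists>c. is_cycle src tgt S c"
  proof
    assume "\<exists>c. is_cycle src tgt S c"
    then obtain c where c: "is_cycle src tgt S c" by blast
    have "length c \<le> card S" using c lenS unfolding is_cycle_def by blast
    then have "girth src tgt E \<le> ereal (real (card S))"
      using girth_le[OF cycle_mono[OF c SE]] by (meson ereal_less_eq(3) of_nat_le_iff order_trans)
    then show False using small by (simp add: S_def)
  qed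
  obtain q where q: "is_walk src tgt S a q b" "distinct (map fst q)"
    "\<forall>e\<in>E. int m dvd (walk_chain q e - walk_chain p e)"
    using acyclic_support_chain_path[OF finV finE ends m2 S_def acyc]
      boundary_walk_chain[OF finE subset_refl p] by blast
  show ?thesis using walk_mono[OF q(1) SE] q(3) lenS[OF q(1,2)] by (auto simp: S_def)
qed


section \<open>The cyclic norm\<close>

definition cyclic_norm :: "nat \<Rightarrow> int \<Rightarrow> nat" where
  "cyclic_norm m i = min (nat \<bar>i\<bar> mod m) (m - nat \<bar>i\<bar> mod m)"

lemma cyclic_norm_le_abs: "int (cyclic_norm m i) \<le> \<bar>i\<bar>"
proof -
  have "nat \<bar>i\<bar> mod m \<le> nat \<bar>i\<bar>" by (rule mod_less_eq_dividend)
  then show ?thesis unfolding cyclic_norm_def by linarith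
qed

lemma cyclic_norm_ge_1:
  assumes "m > 0" "\<not> int m dvd i"
  shows "1 \<le> cyclic_norm m i"
proof -
  have "nat \<bar>i\<bar> mod m \<noteq> 0"
  proof
    assume "nat \<bar>i\<bar> mod m = 0"
    then have "int m dvd \<bar>i\<bar>" by (metis dvd_imp_mod_0 int_dvd_int_iff abs_ge_zero int_nat_eq mod_0_imp_dvd)
    with assms(2) show False by simp
  qed
  moreover have "nat \<bar>i\<bar> mod m < m" using assms(1) by simp
  ultimately show ?thesis unfolding cyclic_norm_def by simp
qed

lemma sum_cyclic_norm_walk_chain_le_length:
  assumes "finite E" "is_walk src tgt E a p b"
  shows "(\<Sum>e\<in>E. cyclic_norm m (walk_chain p e)) \<le> length p"
proof -
  have "int (\<Sum>e\<in>E. cyclic_norm m (walk_chain p e)) = (\<Sum>e\<in>E. int (cyclic_norm m (walk_chain p e)))"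
    by (rule of_nat_sum)
  also have "\<dots> \<le> (\<Sum>e\<in>E. \<bar>walk_chain p e\<bar>)" by (intro sum_mono cyclic_norm_le_abs)
  also have "\<dots> \<le> int (length p)" using sum_abs_walk_chain_le_length[OF assms(1) subset_refl assms(2)] .
  finally show ?thesis by linarith
qed

lemma card_not_dvd_le_sum_cyclic_norm:
  assumes "finite E" "m > 0"
  shows "card {e\<in>E. \<not> int m dvd f e} \<le> (\<Sum>e\<in>E. cyclic_norm m (f e))"
proof -
  have "card {e\<in>E. \<not> int m dvd f e} = (\<Sum>e\<in>{e\<in>E. \<not> int m dvd f e}. 1)" by simp
  also have "\<dots> \<le> (\<Sum>e\<in>{e\<in>E. \<not> int m dvd f e}. cyclic_norm m (f e))"
    using cyclic_norm_ge_1[OF assms(2)] by (intro sum_mono) simp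
  also have "\<dots> \<le> (\<Sum>e\<in>E. cyclic_norm m (f e))" by (rule sum_mono2[OF assms(1)]) auto
  finally show ?thesis .
qed

section \<open>Walks in the homology cover\<close>

abbreviation cover_walk :: "'e set \<Rightarrow> ('e \<Rightarrow> 'v) \<Rightarrow> ('e \<Rightarrow> 'v) \<Rightarrow> 'e set \<Rightarrow> nat
    \<Rightarrow> 'v \<times> ('e \<Rightarrow> int) \<Rightarrow> (('e \<times> ('e \<Rightarrow> int)) \<times> bool) list \<Rightarrow> 'v \<times> ('e \<Rightarrow> int) \<Rightarrow> bool" where
  "cover_walk E src tgt T0 m \<equiv> is_walk (cov_src src) (cov_tgt tgt T0 m) (cov_E E T0 m)"

definition proj_walk :: "(('e \<times> 'k) \<times> bool) list \<Rightarrow> ('e \<times> bool) list" where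
  "proj_walk ds = map (\<lambda>d. (fst (fst d), snd d)) ds"

definition cloud_after :: "'e set \<Rightarrow> nat \<Rightarrow> ('e \<Rightarrow> int) \<Rightarrow> ('e \<times> bool) list \<Rightarrow> 'e \<Rightarrow> int" where
  "cloud_after T0 m k w = (\<lambda>e. (k e + (if e \<notin> T0 then walk_chain w e else 0)) mod int m)"

lemma walk_chain_proj_walk:
  "walk_chain (proj_walk ds) e = int (length (filter (\<lambda>d. fst (fst d) = e \<and> snd d) ds))
    - int (length (filter (\<lambda>d. fst (fst d) = e \<and> \<not> snd d) ds))"
  by (induction ds) (auto simp: proj_walk_def)

lemma cloud_group_mod: "k \<in> cloud_group E T0 m \<Longrightarrow> m > 0 \<Longrightarrow> k e mod int m = k e"
  unfolding cloud_group_def by (cases "e \<in> E - T0") auto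

lemma rho_act_in_cloud_group:
  "k \<in> cloud_group E T0 m \<Longrightarrow> e \<in> E \<Longrightarrow> m > 0 \<Longrightarrow> rho_act T0 m e k \<in> cloud_group E T0 m"
  unfolding cloud_group_def rho_act_def by auto

lemma cover_dart_ends [simp]:
  "dstart (cov_src src) (cov_tgt tgt T0 m) ((e,k),True) = (src e, k)"
  "dend (cov_src src) (cov_tgt tgt T0 m) ((e,k),True) = (tgt e, rho_act T0 m e k)"
  "dstart (cov_src src) (cov_tgt tgt T0 m) ((e,k),False) = (tgt e, rho_act T0 m e k)"
  "dend (cov_src src) (cov_tgt tgt T0 m) ((e,k),False) = (src e, k)"
  by (auto simp: dstart_def dend_def cov_src_def cov_tgt_def)

lemma cloud_after_rho_act: "cloud_after T0 m (rho_act T0 m e k) w = cloud_after T0 m k ((e,True) # w)"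
  unfolding cloud_after_def rho_act_def
  by (rule ext) (simp only: mod_add_left_eq, auto simp: algebra_simps)

lemma cloud_after_rho_act_backwards:
  "cloud_after T0 m k w = cloud_after T0 m (rho_act T0 m e k) ((e,False) # w)"
  unfolding cloud_after_def rho_act_def
  by (rule ext) (simp only: mod_add_left_eq, auto simp: algebra_simps)

lemma cover_walk_proj:
  assumes "m > 0"
  shows "cover_walk E src tgt T0 m (v, k) ds z \<Longrightarrow> k \<in> cloud_group E T0 m \<Longrightarrow>
    is_walk src tgt E v (proj_walk ds) (fst z) \<and> snd z = cloud_after T0 m k (proj_walk ds)"
proof (induction ds arbitrary: v k)
  case Nil then show ?case
    using cloud_group_mod[OF _ assms, of k E T0] by (auto simp: proj_walk_def cloud_after_def)
next
  case (Cons d ds)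
  obtain e k0 b where d: "d = ((e, k0), b)" by (metis prod.collapse)
  have ek: "e \<in> E" "k0 \<in> cloud_group E T0 m" using Cons.prems d by (auto simp: cov_E_def)
  show ?case
  proof (cases b)
    case True
    then have st: "v = src e" "k = k0"
      and w: "cover_walk E src tgt T0 m (tgt e, rho_act T0 m e k) ds z" using Cons.prems d by auto
    show ?thesis
      using Cons.IH[OF w rho_act_in_cloud_group[OF Cons.prems(2) ek(1) assms]] d True st ek
        cloud_after_rho_act[of T0 m e k "proj_walk ds"]
      by (auto simp: proj_walk_def dstart_def dend_def)
  next
    case False
    then have st: "v = tgt e" "k = rho_act T0 m e k0"
      and w: "cover_walk E src tgt T0 m (src e, k0) ds z" using Cons.prems d by auto
    show ?thesis
      using Cons.IH[OF w ek(2)] d False st ek cloud_after_rho_act_backwards[of T0 m k0 "proj_walk ds" e]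
      by (auto simp: proj_walk_def dstart_def dend_def)
  qed
qed

lemma cover_walk_lift:
  assumes "m > 0"
  shows "is_walk src tgt E v w u \<Longrightarrow> k \<in> cloud_group E T0 m \<Longrightarrow>
    \<exists>ds z. cover_walk E src tgt T0 m (v, k) ds z \<and> proj_walk ds = w"
proof (induction w arbitrary: v k)
  case Nil then show ?case by (intro exI[of _ "[]"]) (auto simp: proj_walk_def)
next
  case (Cons d w)
  obtain e b where d: "d = (e, b)" by (metis prod.collapse)
  have e: "e \<in> E" using Cons.prems d by auto
  show ?case
  proof (cases b)
    case True
    have v: "v = src e" and w: "is_walk src tgt E (tgt e) w u"
      using Cons.prems d True by (auto simp: dstart_def dend_def)
    obtain ds z where "cover_walk E src tgt T0 m (tgt e, rho_act T0 m e k) ds z" "proj_walk ds = w"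
      using Cons.IH[OF w rho_act_in_cloud_group[OF Cons.prems(2) e assms]] by blast
    then show ?thesis using v e Cons.prems(2) d True
      by (intro exI[of _ "((e, k), True) # ds"] exI[of _ z]) (auto simp: cov_E_def proj_walk_def)
  next
    case False
    have v: "v = tgt e" and w: "is_walk src tgt E (src e) w u"
      using Cons.prems d False by (auto simp: dstart_def dend_def)
    define k0 where "k0 = (\<lambda>e'. (k e' - (if e' = e \<and> e \<notin> T0 then 1 else 0)) mod int m)"
    have k0: "k0 \<in> cloud_group E T0 m"
      using Cons.prems(2) e assms unfolding cloud_group_def k0_def by auto
    have rk: "rho_act T0 m e k0 = k"
      unfolding rho_act_def k0_def using cloud_group_mod[OF Cons.prems(2) assms]
      by (auto simp: mod_add_left_eq)
    obtain ds z where "cover_walk E src tgt T0 m (src e, k0) ds z" "proj_walk ds = w"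
      using Cons.IH[OF w k0] by blast
    then show ?thesis using v e k0 rk d False
      by (intro exI[of _ "((e, k0), False) # ds"] exI[of _ z]) (auto simp: cov_E_def proj_walk_def)
  qed
qed

lemma cover_walk_iff:
  assumes "m > 0" "k \<in> cloud_group E T0 m"
  shows "(\<exists>ds. cover_walk E src tgt T0 m (a, k) ds (b, k') \<and> length ds = n)
     \<longleftrightarrow> (\<exists>w. is_walk src tgt E a w b \<and> cloud_after T0 m k w = k' \<and> length w = n)"
proof
  assume "\<exists>ds. cover_walk E src tgt T0 m (a, k) ds (b, k') \<and> length ds = n"
  then show "\<exists>w. is_walk src tgt E a w b \<and> cloud_after T0 m k w = k' \<and> length w = n"
    using cover_walk_proj[OF assms(1) _ assms(2)] by (fastforce simp: proj_walk_def)
next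
  assume "\<exists>w. is_walk src tgt E a w b \<and> cloud_after T0 m k w = k' \<and> length w = n"
  then obtain w where w: "is_walk src tgt E a w b" "cloud_after T0 m k w = k'" "length w = n" by blast
  obtain ds z where ds: "cover_walk E src tgt T0 m (a, k) ds z" "proj_walk ds = w"
    using cover_walk_lift[OF assms(1) w(1) assms(2)] by blast
  have "is_walk src tgt E a w (fst z)" "snd z = k'"
    using cover_walk_proj[OF assms(1) ds(1) assms(2)] ds(2) w(2) by auto
  then have "z = (b, k')" using walk_end_unique[OF _ w(1)] by (metis prod.collapse)
  then show "\<exists>ds. cover_walk E src tgt T0 m (a, k) ds (b, k') \<and> length ds = n"
    using ds w(3) by (auto simp: proj_walk_def)
qed

lemma cloud_after_cong:
  assumes "\<And>e. int m dvd walk_chain q e - walk_chain p e"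
  shows "cloud_after T0 m k q = cloud_after T0 m k p"
proof (rule ext)
  fix e
  have "int m dvd (k e + (if e \<notin> T0 then walk_chain q e else 0))
      - (k e + (if e \<notin> T0 then walk_chain p e else 0))"
    using assms[of e] by auto
  then show "cloud_after T0 m k q e = cloud_after T0 m k p e"
    unfolding cloud_after_def by (simp only: mod_eq_dvd_iff)
qed

lemma cov_dist_le_length:
  assumes "m > 0" "k \<in> cloud_group E T0 m"
    and "is_walk src tgt E a w b" "cloud_after T0 m k w = k'"
  shows "cov_dist E src tgt T0 m (a, k) (b, k') \<le> length w"
proof -
  have "\<exists>ds. cover_walk E src tgt T0 m (a, k) ds (b, k') \<and> length ds = length w"
    using cover_walk_iff[OF assms(1,2), of src tgt a b k' "length w"] assms(3,4) by blast
  then show ?thesis unfolding cov_dist_def graph_dist_def by (metis (mono_tags) Least_le)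
qed

text \<open>Each edge \<open>e \<notin> T\<^sub>0\<close> closes up with two tree paths to a closed walk whose chain
  vanishes off \<open>T\<^sub>0\<close> except at \<open>e\<close>.\<close>

lemma closed_walk_with_chain:
  assumes "finite A" "A \<subseteq> E - T0" and conn: "connected_on src tgt V T0" and aV: "a \<in> V"
    and ends: "\<forall>e\<in>E. src e \<in> V \<and> tgt e \<in> V" and T0E: "T0 \<subseteq> E"
  shows "\<exists>W. is_walk src tgt E a W a \<and> (\<forall>e. e \<notin> T0 \<longrightarrow> walk_chain W e = (if e \<in> A then int (r e) else 0))"
  using assms(1,2)
proof (induction A rule: finite_induct)
  case empty then show ?case by (intro exI[of _ "[]"]) auto
next
  case (insert e0 A)
  then obtain W where W: "is_walk src tgt E a W a"
    "\<forall>e. e \<notin> T0 \<longrightarrow> walk_chain W e = (if e \<in> A then int (r e) else 0)" by blast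
  have e0: "e0 \<in> E" "e0 \<notin> T0" using insert by auto
  obtain P1 P2 where P1: "is_walk src tgt T0 a P1 (src e0)" and P2: "is_walk src tgt T0 (tgt e0) P2 a"
    using conn aV ends e0 unfolding connected_on_def by meson
  define c where "c = P1 @ (e0, True) # P2"
  have wc: "is_walk src tgt E a c a"
    using walk_mono[OF P1 T0E] walk_mono[OF P2 T0E] e0 unfolding c_def
    by (auto simp: walk_append dstart_def dend_def)
  have "walk_chain c e = (if e0 = e then 1 else 0)" if "e \<notin> T0" for e
    using walk_chain_outside[OF P1 that] walk_chain_outside[OF P2 that] unfolding c_def
    by (simp add: walk_chain_append)
  then show ?case using walk_replicate[OF wc, of "r e0"] W insert(2)
    by (intro exI[of _ "concat (replicate (r e0) c) @ W"])
      (auto simp: walk_append walk_chain_append walk_chain_replicate)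
qed

lemma cover_connected:
  assumes m: "m > 0" and finE: "finite E" and T0E: "T0 \<subseteq> E" and conn: "connected_on src tgt V T0"
    and ends: "\<forall>e\<in>E. src e \<in> V \<and> tgt e \<in> V" and aV: "a \<in> V" and bV: "b \<in> V"
    and kx: "kx \<in> cloud_group E T0 m" and ky: "ky \<in> cloud_group E T0 m"
  shows "\<exists>w. is_walk src tgt E a w b \<and> cloud_after T0 m kx w = ky"
proof -
  define r where "r = (\<lambda>e. nat ((ky e - kx e) mod int m))"
  obtain W where W: "is_walk src tgt E a W a"
    "\<forall>e. e \<notin> T0 \<longrightarrow> walk_chain W e = (if e \<in> E - T0 then int (r e) else 0)"
    using closed_walk_with_chain[of "E - T0" E T0 src tgt V a r] finE conn aV ends T0E by auto
  obtain P where P: "is_walk src tgt T0 a P b" using conn aV bV unfolding connected_on_def by blast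
  have "cloud_after T0 m kx (W @ P) e = ky e" for e
  proof (cases "e \<in> E - T0")
    case True
    then have "cloud_after T0 m kx (W @ P) e = (kx e + (ky e - kx e) mod int m) mod int m"
      unfolding cloud_after_def using W(2) walk_chain_outside[OF P] m
      by (simp add: walk_chain_append r_def)
    also have "\<dots> = ky e" using cloud_group_mod[OF ky m] by (simp add: mod_add_right_eq)
    finally show ?thesis .
  next
    case False
    then show ?thesis using kx ky W(2) walk_chain_outside[OF P, of e]
      unfolding cloud_after_def cloud_group_def by (auto simp: walk_chain_append)
  qed
  moreover have "is_walk src tgt E a (W @ P) b" using W(1) walk_mono[OF P T0E] by (auto simp: walk_append)
  ultimately show ?thesis by blast
qed

lemma geodesic_projection:
  assumes m: "m > 0" and finE: "finite E" and T0E: "T0 \<subseteq> E" and conn: "connected_on src tgt V T0"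
    and ends: "\<forall>e\<in>E. src e \<in> V \<and> tgt e \<in> V" and aV: "a \<in> V" and bV: "b \<in> V"
    and kx: "kx \<in> cloud_group E T0 m" and ky: "ky \<in> cloud_group E T0 m"
  obtains p where "is_walk src tgt E a p b" "cloud_after T0 m kx p = ky"
    "length p = cov_dist E src tgt T0 m (a, kx) (b, ky)"
    "\<And>e. phi E src tgt T0 m e (a, kx) (b, ky) = nat \<bar>walk_chain p e\<bar> mod m"
proof -
  define D where "D = cov_dist E src tgt T0 m (a, kx) (b, ky)"
  obtain w where "is_walk src tgt E a w b" "cloud_after T0 m kx w = ky"
    using cover_connected[OF assms] by blast
  then have "\<exists>ds. cover_walk E src tgt T0 m (a, kx) ds (b, ky) \<and> length ds = length w"
    using cover_walk_iff[OF m kx, of src tgt a b ky "length w"] by blast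
  then have "\<exists>ds. cover_walk E src tgt T0 m (a, kx) ds (b, ky) \<and> length ds = D"
    unfolding D_def cov_dist_def graph_dist_def by (rule LeastI)
  then have "cover_walk E src tgt T0 m (a, kx) (geodesic E src tgt T0 m (a, kx) (b, ky)) (b, ky)
    \<and> length (geodesic E src tgt T0 m (a, kx) (b, ky)) = D"
    unfolding geodesic_def D_def[symmetric] by (rule someI_ex)
  then have \<gamma>: "cover_walk E src tgt T0 m (a, kx) (geodesic E src tgt T0 m (a, kx) (b, ky)) (b, ky)"
    "length (geodesic E src tgt T0 m (a, kx) (b, ky)) = D" by auto
  define p where "p = proj_walk (geodesic E src tgt T0 m (a, kx) (b, ky))"
  show ?thesis
  proof
    show "is_walk src tgt E a p b" "cloud_after T0 m kx p = ky"
      using cover_walk_proj[OF m \<gamma>(1) kx] by (auto simp: p_def)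
    show "length p = cov_dist E src tgt T0 m (a, kx) (b, ky)"
      using \<gamma>(2) by (simp add: p_def proj_walk_def D_def)
    show "phi E src tgt T0 m e (a, kx) (b, ky) = nat \<bar>walk_chain p e\<bar> mod m" for e
      unfolding phi_def Let_def p_def walk_chain_proj_walk by simp
  qed
qed

lemma cov_dist_le_sum_cyclic_norm:
  assumes finV: "finite V" and finE: "finite E" and ends: "\<forall>e\<in>E. src e \<in> V \<and> tgt e \<in> V"
    and m2: "m \<ge> 2" and kx: "kx \<in> cloud_group E T0 m"
    and p: "is_walk src tgt E a p b" "cloud_after T0 m kx p = ky"
    and small: "ereal (real (\<Sum>e\<in>E. cyclic_norm m (walk_chain p e))) < girth src tgt E"
  shows "cov_dist E src tgt T0 m (a, kx) (b, ky) \<le> (\<Sum>e\<in>E. cyclic_norm m (walk_chain p e))"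
proof -
  let ?S = "{e\<in>E. \<not> int m dvd walk_chain p e}"
  have S: "card ?S \<le> (\<Sum>e\<in>E. cyclic_norm m (walk_chain p e))"
    using card_not_dvd_le_sum_cyclic_norm[OF finE] m2 by simp
  then have "ereal (real (card ?S)) < girth src tgt E"
    using small by (meson ereal_less_eq(3) of_nat_le_iff order.strict_trans1)
  then obtain q where q: "is_walk src tgt E a q b"
    "\<forall>e\<in>E. int m dvd (walk_chain q e - walk_chain p e)" "length q \<le> card ?S"
    using short_walk_with_same_residues[OF finV finE ends m2 p(1)] by blast
  have "int m dvd walk_chain q e - walk_chain p e" for e
    using q(2) walk_chain_outside[OF q(1), of e] walk_chain_outside[OF p(1), of e] by (cases "e \<in> E") auto
  then have "cloud_after T0 m kx q = ky" using p(2) cloud_after_cong by metis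
  then have "cov_dist E src tgt T0 m (a, kx) (b, ky) \<le> length q"
    using cov_dist_le_length[OF _ kx q(1)] m2 by simp
  then show ?thesis using q(3) S by linarith
qed

section \<open>Counting spanning trees\<close>

lemma N_edge_nonzero:
  assumes "is_graph V E src tgt" "two_connected V E src tgt" "\<forall>e\<in>E. N_edge V E src tgt e = N"
    and T0: "spanning_tree V E src tgt T0" and "e \<in> E"
  shows "N_edge V E src tgt e \<noteq> 0"
proof (cases "E \<subseteq> T0")
  case True
  have "\<forall>e\<in>E. src e \<in> V \<and> tgt e \<in> V" using assms(1) unfolding is_graph_def by blast
  then obtain c where "is_cycle src tgt E c"
    using two_connected_edge_on_cycle[OF assms(2) _ assms(5)] by blast
  then have "is_cycle src tgt T0 c" using cycle_mono[OF _ True] by blast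
  then show ?thesis using T0 unfolding spanning_tree_def by blast
next
  case False
  then obtain e1 where e1: "e1 \<in> E" "e1 \<notin> T0" by blast
  have "finite {T. spanning_tree V E src tgt T \<and> e1 \<notin> T}"
    by (rule finite_subset[of _ "Pow E"]) (use assms(1) in \<open>auto simp: spanning_tree_def is_graph_def\<close>)
  moreover have "T0 \<in> {T. spanning_tree V E src tgt T \<and> e1 \<notin> T}" using T0 e1 by simp
  ultimately have "N_edge V E src tgt e1 \<noteq> 0" unfolding N_edge_def by auto
  then show ?thesis using assms(3,5) e1(1) by auto
qed

text \<open>With all \<open>N\<^sub>e \<noteq> 0\<close> the weights \<open>1/N\<^sub>e\<close> in \<open>d\<^sub>Q\<close> exactly cancel the number of trees summed over.\<close>

lemma dQ_eq_sum:
  assumes "\<forall>e\<in>E. N_edge V E src tgt e \<noteq> 0"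
  shows "dQ V E src tgt T0 m x y =
    (\<Sum>e\<in>E. real (min (phi E src tgt T0 m e x y) (m - phi E src tgt T0 m e x y)))"
  unfolding dQ_def
proof (rule sum.cong[OF refl])
  fix e assume "e \<in> E"
  then show "(\<Sum>T\<in>{T. spanning_tree V E src tgt T \<and> e \<notin> T}.
      1 / real (N_edge V E src tgt e) * real (min (phi E src tgt T0 m e x y) (m - phi E src tgt T0 m e x y)))
    = real (min (phi E src tgt T0 m e x y) (m - phi E src tgt T0 m e x y))"
    using assms by (simp add: N_edge_def[symmetric])
qed

theorem mainTheorem3:
  fixes V :: "'v set" and E :: "'e set" and src tgt :: "'e \<Rightarrow> 'v"
    and m N :: nat and T0 :: "'e set" and x y :: "'v \<times> ('e \<Rightarrow> int)"
  assumes "m \<ge> 3"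
    and "is_graph V E src tgt"
    and "connected_on src tgt V E"
    and "two_connected V E src tgt"
    and "\<forall>e\<in>E. N_edge V E src tgt e = N"
    and "spanning_tree V E src tgt T0"
    and "x \<in> cov_V V E T0 m" and "y \<in> cov_V V E T0 m"
  shows "(ereal (dQ V E src tgt T0 m x y) < girth src tgt E
            \<longleftrightarrow> ereal (real (cov_dist E src tgt T0 m x y)) < girth src tgt E)
       \<and> (ereal (real (cov_dist E src tgt T0 m x y)) < girth src tgt E
            \<longrightarrow> dQ V E src tgt T0 m x y = real (cov_dist E src tgt T0 m x y))"
proof -
  obtain a kx b ky where x: "x = (a, kx)" and y: "y = (b, ky)" by (cases x, cases y)
  have X: "finite V" "finite E" "\<forall>e\<in>E. src e \<in> V \<and> tgt e \<in> V"
    using assms(2) unfolding is_graph_def by auto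
  have T0: "T0 \<subseteq> E" "connected_on src tgt V T0" using assms(6) unfolding spanning_tree_def by auto
  have xy: "a \<in> V" "b \<in> V" "kx \<in> cloud_group E T0 m" "ky \<in> cloud_group E T0 m"
    using assms(7,8) x y by (auto simp: cov_V_def)
  obtain p where p: "is_walk src tgt E a p b" "cloud_after T0 m kx p = ky"
      "length p = cov_dist E src tgt T0 m x y"
    and phi: "\<And>e. phi E src tgt T0 m e x y = nat \<bar>walk_chain p e\<bar> mod m"
    using geodesic_projection[OF _ X(2) T0 X(3) xy] assms(1) x y by auto
  define s where "s = (\<Sum>e\<in>E. cyclic_norm m (walk_chain p e))"
  have "dQ V E src tgt T0 m x y = (\<Sum>e\<in>E. real (min (phi E src tgt T0 m e x y) (m - phi E src tgt T0 m e x y)))"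
    using N_edge_nonzero[OF assms(2,4,5,6)] by (intro dQ_eq_sum) blast
  also have "\<dots> = real s" unfolding s_def of_nat_sum phi cyclic_norm_def ..
  finally have "dQ V E src tgt T0 m x y = real s" .
  moreover have "s \<le> cov_dist E src tgt T0 m x y"
    using sum_cyclic_norm_walk_chain_le_length[OF X(2) p(1)] p(3) by (simp add: s_def)
  moreover have "ereal (real s) < girth src tgt E \<Longrightarrow> cov_dist E src tgt T0 m x y \<le> s"
    using cov_dist_le_sum_cyclic_norm[OF X _ xy(3) p(1,2)] assms(1) x y by (simp add: s_def)
  ultimately show ?thesis
    by (smt (verit) ereal_less_eq(3) of_nat_le_iff order.strict_trans1 antisym)
qed


end
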